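(* Let $0<u<1$ and let ${\mathcal Q} = u\,{\rm Re}\,{\mathcal Q_1} + (1-u)\,{\rm Re}\,{\mathcal Q_2} + {\rm Re}\,{\mathcal Q_3}$ be a negative definite matrix, where ${\mathcal Q_1},{\mathcal Q_2},{\mathcal Q_3}$ are the $6\times 6$ matrices defined in the context below, and let ${\bf b} = (0,1,0,0,0,1)^\top$. Then when ${\mathcal Q}$ is full rank for all $0<u<1$, the Holevo Cramér–Rao bound (with identity weight matrix) satisfies $\mathscr{L}_u \le C_{\mathsf{H}} \le \mathscr{U}_u$, where \[ \mathscr{L}_u = -\frac{1}{4} {\bf b}^\top {\mathcal Q}^{-1} {\bf b},\qquad \mathscr{U}_u = \frac{1}{4} \max\left\{ {\bf b}^{\top}{\mathcal Q}^{-1} {\mathcal Q_1} {\mathcal Q}^{-1} {\bf b},\ {\bf b}^{\top} {\mathcal Q}^{-1} {\mathcal Q_2} {\mathcal Q}^{-1} {\bf b} \right\}, \] with equality on both sides attained at the stationary point of the lower bound with respect to $u$, i.e. when $\frac{d}{du}({\bf b}^\top {\mathcal Q}^{-1} {\bf b}) = ({\bf b}^\top {\mathcal Q}^{-1} \frac{d{\mathcal Q}}{du} {\mathcal Q}^{-1} {\bf b}) = 0$.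
   Context: Two-parameter estimation with a full-rank density matrix $\rho=\rho(\theta_1,\theta_2)$ of dimension $D$ with spectral decomposition $\rho=\sum_j p_j|e_j\rangle\langle e_j|$, and $\rho_1=\partial_1\rho$, $\rho_2=\partial_2\rho$. The HCRB with identity weight is $C_{\mathsf H}=\min_{X_1,X_2}\{{\rm Tr}\,{\rm Re}Z+\|{\rm Im}Z\|_1\}$ over Hermitian $X_1,X_2$ with ${\rm Tr}(\rho X_j)=0$, ${\rm Tr}(\partial_j\rho X_k)=\delta_{jk}$, where $Z_{jk}={\rm Tr}(\rho X_jX_k)$. For $0<u<1$ define $\gamma_1=-\mathbb{1}_D/2$, $\gamma_2=-\sum_{j,k}(u p_k+(1-u)p_j)^{-1}\langle e_j|\rho_1/2|e_k\rangle|e_j\rangle\langle e_k|$, $\gamma_3=-\sum_{j,k}(u p_k+(1-u)p_j)^{-1}\langle e_j|\rho_2/2|e_k\rangle|e_j\rangle\langle e_k|$. Define the $3\times3$ matrices $G_1=\begin{pmatrix}1/4&0&0\\0&{\rm Tr}(\gamma_2\rho\gamma_2^\dagger)&{\rm Tr}(\gamma_2\rho\gamma_3^\dagger)\\0&{\rm Tr}(\gamma_3\rho\gamma_2^\dagger)&{\rm Tr}(\gamma_3\rho\gamma_3^\dagger)\end{pmatrix}$, $G_2=\begin{pmatrix}1/4&0&0\\0&{\rm Tr}(\gamma_2^\dagger\rho\gamma_2)&{\rm Tr}(\gamma_2^\dagger\rho\gamma_3)\\0&{\rm Tr}(\gamma_3^\dagger\rho\gamma_2)&{\rm Tr}(\gamma_3^\dagger\rho\gamma_3)\end{pmatrix}$,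 $G_3=\begin{pmatrix}-1/2&0&0\\0&{\rm Tr}(\rho_1\gamma_2)&{\rm Tr}(\rho_1\gamma_3)\\0&{\rm Tr}(\rho_2\gamma_2)&{\rm Tr}(\rho_2\gamma_3)\end{pmatrix}$, and the $6\times6$ block matrices ${\mathcal Q_1}=\begin{pmatrix}G_1&-iG_1\\ iG_1&G_1\end{pmatrix}$, ${\mathcal Q_2}=\begin{pmatrix}G_2&iG_2\\ -iG_2&G_2\end{pmatrix}$, ${\mathcal Q_3}=\frac12\begin{pmatrix}G_3+G_3^*&i(G_3-G_3^* )\\ -i(G_3-G_3^* )&G_3+G_3^*\end{pmatrix}$. *)

theory Defs
  imports "HOL-Analysis.Analysis"
begin

definition cadj :: "complex^'n^'n \<Rightarrow> complex^'n^'n" where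
  "cadj A = (\<chi> i j. cnj (A$j$i))"

definition hermitian_mat :: "complex^'n^'n \<Rightarrow> bool" where
  "hermitian_mat A \<longleftrightarrow> cadj A = A"

definition cinner :: "complex^'n \<Rightarrow> complex^'n \<Rightarrow> complex" where
  "cinner x y = (\<Sum>i\<in>UNIV. cnj (x$i) * y$i)"

text \<open>gamma operator:
  gamma_op u p e A = - sum_{j,k} (u p_k + (1-u) p_j)^{-1} <e_j|A/2|e_k> |e_j><e_k|.
  gamma_2 = gamma_op u p e rho_1,  gamma_3 = gamma_op u p e rho_2.\<close>
definition gamma_op :: "real \<Rightarrow> ('n::finite \<Rightarrow> real) \<Rightarrow> ('n \<Rightarrow> complex^'n) \<Rightarrow>
    complex^'n^'n \<Rightarrow> complex^'n^'n" where
  "gamma_op u p e A = (\<chi> a b. \<Sum>j\<in>UNIV. \<Sum>k\<in>UNIV.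
      - (cinner (e j) (A *v e k) / 2) / complex_of_real (u * p k + (1 - u) * p j)
        * (e j $ a) * cnj (e k $ b))"

section \<open>The 3x3 matrices G1, G2, G3 (index 0,1,2 of type 3 = rows 1,2,3 of the paper)\<close>

definition G1 :: "real \<Rightarrow> complex^'n^'n \<Rightarrow> complex^'n^'n \<Rightarrow> complex^'n^'n \<Rightarrow>
    ('n::finite \<Rightarrow> real) \<Rightarrow> ('n \<Rightarrow> complex^'n) \<Rightarrow> complex^3^3" where
  "G1 u \<rho> \<rho>1 \<rho>2 p e = (let g = (\<lambda>a::3. if a = 1 then gamma_op u p e \<rho>1 else gamma_op u p e \<rho>2) in
     (\<chi> a b. if a = 0 \<and> b = 0 then 1/4 else if a = 0 \<or> b = 0 then 0
             else trace (g a ** \<rho> ** cadj (g b))))"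

definition G2 :: "real \<Rightarrow> complex^'n^'n \<Rightarrow> complex^'n^'n \<Rightarrow> complex^'n^'n \<Rightarrow>
    ('n::finite \<Rightarrow> real) \<Rightarrow> ('n \<Rightarrow> complex^'n) \<Rightarrow> complex^3^3" where
  "G2 u \<rho> \<rho>1 \<rho>2 p e = (let g = (\<lambda>a::3. if a = 1 then gamma_op u p e \<rho>1 else gamma_op u p e \<rho>2) in
     (\<chi> a b. if a = 0 \<and> b = 0 then 1/4 else if a = 0 \<or> b = 0 then 0
             else trace (cadj (g a) ** \<rho> ** g b)))"

definition G3 :: "real \<Rightarrow> complex^'n^'n \<Rightarrow> complex^'n^'n \<Rightarrow>
    ('n::finite \<Rightarrow> real) \<Rightarrow> ('n \<Rightarrow> complex^'n) \<Rightarrow> complex^3^3" where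
  "G3 u \<rho>1 \<rho>2 p e = (let g = (\<lambda>a::3. if a = 1 then gamma_op u p e \<rho>1 else gamma_op u p e \<rho>2);
                            r = (\<lambda>a::3. if a = 1 then \<rho>1 else \<rho>2) in
     (\<chi> a b. if a = 0 \<and> b = 0 then - 1/2 else if a = 0 \<or> b = 0 then 0
             else trace (r a ** g b)))"

section \<open>6x6 block matrices; index type 3 + 3: Inl a = row a+1, Inr a = row a+4\<close>

definition blk6 :: "'a^3^3 \<Rightarrow> 'a^3^3 \<Rightarrow> 'a^3^3 \<Rightarrow> 'a^3^3 \<Rightarrow> 'a^(3+3)^(3+3)" where
  "blk6 A B C D = (\<chi> i j. case i of
       Inl a \<Rightarrow> (case j of Inl b \<Rightarrow> A$a$b | Inr b \<Rightarrow> B$a$b)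
     | Inr a \<Rightarrow> (case j of Inl b \<Rightarrow> C$a$b | Inr b \<Rightarrow> D$a$b))"

definition cscale :: "complex \<Rightarrow> complex^'m^'k \<Rightarrow> complex^'m^'k" where
  "cscale c M = (\<chi> i j. c * M$i$j)"

definition cconj :: "complex^'m^'k \<Rightarrow> complex^'m^'k" where
  "cconj M = (\<chi> i j. cnj (M$i$j))"

definition ReM :: "complex^'m^'k \<Rightarrow> real^'m^'k" where
  "ReM M = (\<chi> i j. Re (M$i$j))"

definition Q1 :: "real \<Rightarrow> complex^'n^'n \<Rightarrow> complex^'n^'n \<Rightarrow> complex^'n^'n \<Rightarrow>
    ('n::finite \<Rightarrow> real) \<Rightarrow> ('n \<Rightarrow> complex^'n) \<Rightarrow> complex^(3+3)^(3+3)" where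
  "Q1 u \<rho> \<rho>1 \<rho>2 p e = (let G = G1 u \<rho> \<rho>1 \<rho>2 p e in
     blk6 G (cscale (- \<i>) G) (cscale \<i> G) G)"

definition Q2 :: "real \<Rightarrow> complex^'n^'n \<Rightarrow> complex^'n^'n \<Rightarrow> complex^'n^'n \<Rightarrow>
    ('n::finite \<Rightarrow> real) \<Rightarrow> ('n \<Rightarrow> complex^'n) \<Rightarrow> complex^(3+3)^(3+3)" where
  "Q2 u \<rho> \<rho>1 \<rho>2 p e = (let G = G2 u \<rho> \<rho>1 \<rho>2 p e in
     blk6 G (cscale \<i> G) (cscale (- \<i>) G) G)"

definition Q3 :: "real \<Rightarrow> complex^'n^'n \<Rightarrow> complex^'n^'n \<Rightarrow>
    ('n::finite \<Rightarrow> real) \<Rightarrow> ('n \<Rightarrow> complex^'n) \<Rightarrow> complex^(3+3)^(3+3)" where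
  "Q3 u \<rho>1 \<rho>2 p e = (let G = G3 u \<rho>1 \<rho>2 p e in
     cscale (1/2) (blk6 (G + cconj G) (cscale \<i> (G - cconj G))
                        (cscale (- \<i>) (G - cconj G)) (G + cconj G)))"

definition Qmat :: "real \<Rightarrow> complex^'n^'n \<Rightarrow> complex^'n^'n \<Rightarrow> complex^'n^'n \<Rightarrow>
    ('n::finite \<Rightarrow> real) \<Rightarrow> ('n \<Rightarrow> complex^'n) \<Rightarrow> real^(3+3)^(3+3)" where
  "Qmat u \<rho> \<rho>1 \<rho>2 p e =
     u *\<^sub>R ReM (Q1 u \<rho> \<rho>1 \<rho>2 p e) + (1 - u) *\<^sub>R ReM (Q2 u \<rho> \<rho>1 \<rho>2 p e) + ReM (Q3 u \<rho>1 \<rho>2 p e)"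

text \<open>b = (0,1,0,0,0,1)^T: rows 2 and 6, i.e. indices Inl 1 and Inr 2.\<close>
definition bvec :: "real^(3+3)" where
  "bvec = (\<chi> i. if i = Inl 1 \<or> i = Inr 2 then 1 else 0)"

definition neg_definite :: "real^'k^'k \<Rightarrow> bool" where
  "neg_definite Q \<longleftrightarrow> (\<forall>x. x \<noteq> 0 \<longrightarrow> x \<bullet> (Q *v x) < 0)"

definition Lbound :: "real^(3+3)^(3+3) \<Rightarrow> real" where
  "Lbound Q = - (1/4) * (bvec \<bullet> (matrix_inv Q *v bvec))"

definition cquad :: "real^'k \<Rightarrow> complex^'k^'k \<Rightarrow> real^'k \<Rightarrow> complex" where
  "cquad x M y = (\<Sum>i\<in>UNIV. \<Sum>j\<in>UNIV. complex_of_real (x$i) * M$i$j * complex_of_real (y$j))"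

definition Ubound :: "real^(3+3)^(3+3) \<Rightarrow> complex^(3+3)^(3+3) \<Rightarrow> complex^(3+3)^(3+3) \<Rightarrow> real" where
  "Ubound Q A B = (1/4) * max (Re (cquad (bvec v* matrix_inv Q) A (matrix_inv Q *v bvec)))
                              (Re (cquad (bvec v* matrix_inv Q) B (matrix_inv Q *v bvec)))"

text \<open>Trace norm (sum of singular values) of the real 2x2 matrix [[a,b],[c,d]]:
  singular values are square roots of the eigenvalues of A^T A, whose trace is
  t = a^2+b^2+c^2+d^2 and determinant is (ad-bc)^2.\<close>
definition trace_norm_2x2 :: "real \<Rightarrow> real \<Rightarrow> real \<Rightarrow> real \<Rightarrow> real" where
  "trace_norm_2x2 a b c d =
     (let t = a\<^sup>2 + b\<^sup>2 + c\<^sup>2 + d\<^sup>2; \<delta> = (a*d - b*c)\<^sup>2 in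
        sqrt ((t + sqrt (t\<^sup>2 - 4*\<delta>)) / 2) + sqrt ((t - sqrt (t\<^sup>2 - 4*\<delta>)) / 2))"

definition holevo_feasible :: "complex^'n^'n \<Rightarrow> complex^'n^'n \<Rightarrow> complex^'n^'n \<Rightarrow>
    complex^'n^'n \<Rightarrow> complex^'n^'n \<Rightarrow> bool" where
  "holevo_feasible \<rho> \<rho>1 \<rho>2 X1 X2 \<longleftrightarrow>
     hermitian_mat X1 \<and> hermitian_mat X2 \<and>
     trace (\<rho> ** X1) = 0 \<and> trace (\<rho> ** X2) = 0 \<and>
     trace (\<rho>1 ** X1) = 1 \<and> trace (\<rho>1 ** X2) = 0 \<and>
     trace (\<rho>2 ** X1) = 0 \<and> trace (\<rho>2 ** X2) = 1"

definition holevo_fun :: "complex^'n^'n \<Rightarrow> complex^'n^'n \<Rightarrow> complex^'n^'n \<Rightarrow> real" where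
  "holevo_fun \<rho> X1 X2 =
     (let z11 = trace (\<rho> ** X1 ** X1); z12 = trace (\<rho> ** X1 ** X2);
          z21 = trace (\<rho> ** X2 ** X1); z22 = trace (\<rho> ** X2 ** X2) in
      Re z11 + Re z22 + trace_norm_2x2 (Im z11) (Im z12) (Im z21) (Im z22))"

definition HCRB :: "complex^'n^'n \<Rightarrow> complex^'n^'n \<Rightarrow> complex^'n^'n \<Rightarrow> real" where
  "HCRB \<rho> \<rho>1 \<rho>2 = Inf {holevo_fun \<rho> X1 X2 | X1 X2. holevo_feasible \<rho> \<rho>1 \<rho>2 X1 X2}"

end

theory Submission
  imports Defs
begin

(* Put A = X1 + i X2 and write A' for the adjoint.  For Hermitian X1, X2 the imaginary part of Z
   is antisymmetric, so the Holevo function is max {Tr(A rho A'), Tr(A' rho A)}, and the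
   constraints become Tr(rho A) = 0, Tr(rho_1 A) = 1, Tr(rho_2 A) = i.  Replace the maximum by the
   convex combination F_u(A) = u Tr(A rho A') + (1-u) Tr(A' rho A), a positive semidefinite
   Hermitian form.  The operators gamma_j solve u gamma rho + (1-u) rho gamma = -R/2 for
   R = rho, rho_1, rho_2; hence on the span C(w) = sum_j (w_j + i w_(j+3)) gamma_j the form F_u is
   -w^T Q w, and the F_u-pairing of any A with C(w) is fixed by the constraints alone.  Expanding
   F_u(A - C(w)) >= 0 gives F_u(A) >= -b^T w + w^T Q w, which is L_u for w = Q^-1 b / 2.  This C(w)
   is itself feasible and its Holevo function is U_u.  Finally v -> F_v(C(w)) - L_v is
   nonnegative on (0,1) and vanishes at u; at a stationary point of L its derivative
   Tr(A rho A') - Tr(A' rho A) vanishes, so there F_u is the maximum and L_u = U_u. *)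

section \<open>Complex matrix algebra\<close>

lemma cadj_cadj [simp]: "cadj (cadj A) = A"
  by (simp add: cadj_def vec_eq_iff)

lemma cadj_mult: "cadj (A ** B) = cadj B ** cadj A"
  by (simp add: cadj_def vec_eq_iff matrix_matrix_mult_def mult.commute)

lemma cadj_add: "cadj (A + B) = cadj A + cadj B"
  by (simp add: cadj_def vec_eq_iff)

lemma cadj_diff: "cadj (A - B) = cadj A - cadj B"
  by (simp add: cadj_def vec_eq_iff)

lemma cadj_zero [simp]: "cadj 0 = 0"
  by (simp add: cadj_def vec_eq_iff)

lemma cadj_mat_1 [simp]: "cadj (mat 1) = mat 1"
  by (simp add: cadj_def mat_def vec_eq_iff)

lemma cadj_cscale: "cadj (cscale c A) = cscale (cnj c) (cadj A)"
  by (simp add: cadj_def cscale_def vec_eq_iff)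

lemma cadj_sum: "cadj (\<Sum>a\<in>S. f a) = (\<Sum>a\<in>S. cadj (f a))"
  by (induct S rule: infinite_finite_induct) (simp_all add: cadj_add)

lemma trace_cadj: "trace (cadj A) = cnj (trace A)"
  by (simp add: cadj_def trace_def)

lemma trace_cscale: "trace (cscale c A) = c * trace A"
  by (simp add: cscale_def trace_def sum_distrib_left)

lemma trace_sum: "trace (\<Sum>a\<in>S. f a) = (\<Sum>a\<in>S. trace (f a :: 'a::comm_semiring_1^'n^'n))"
  unfolding trace_def by (simp add: sum_component sum.swap[of _ S])

lemma cscale_mult_left: "cscale c A ** B = cscale c (A ** B)"
  by (simp add: cscale_def vec_eq_iff matrix_matrix_mult_def sum_distrib_left mult.assoc)

lemma cscale_mult_right: "A ** cscale c B = cscale c (A ** B)"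
  by (simp add: cscale_def vec_eq_iff matrix_matrix_mult_def sum_distrib_left algebra_simps)

lemma matrix_add_rdistrib: "(A + B) ** C = A ** C + B ** (C::'a::semiring_1^_^_)"
  by (simp add: matrix_matrix_mult_def vec_eq_iff sum.distrib distrib_right)

lemma matrix_diff_ldistrib: "A ** (B - C) = A ** B - A ** (C::'a::ring_1^_^_)"
  by (simp add: matrix_matrix_mult_def vec_eq_iff sum_subtractf right_diff_distrib)

lemma matrix_diff_rdistrib: "(A - B) ** C = A ** C - B ** (C::'a::ring_1^_^_)"
  by (simp add: matrix_matrix_mult_def vec_eq_iff sum_subtractf left_diff_distrib)

lemma sum_matrix_mult_left: "(\<Sum>a\<in>S. f a) ** (B::'a::semiring_1^_^_) = (\<Sum>a\<in>S. f a ** B)"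
  by (induct S rule: infinite_finite_induct) (simp_all add: matrix_add_rdistrib)

lemma sum_matrix_mult_right: "(B::'a::semiring_1^_^_) ** (\<Sum>a\<in>S. f a) = (\<Sum>a\<in>S. B ** f a)"
  by (induct S rule: infinite_finite_induct) (simp_all add: matrix_add_ldistrib)

lemma matrix_inv_mult:
  fixes Q :: "'a::semiring_1^'k^'k"
  assumes "invertible Q"
  shows "Q ** matrix_inv Q = mat 1" "matrix_inv Q ** Q = mat 1"
proof -
  have "\<exists>Q'. Q ** Q' = mat 1 \<and> Q' ** Q = mat 1"
    using assms by (simp add: invertible_def)
  then have "Q ** matrix_inv Q = mat 1 \<and> matrix_inv Q ** Q = mat 1"
    unfolding matrix_inv_def by (rule someI_ex)
  then show "Q ** matrix_inv Q = mat 1" "matrix_inv Q ** Q = mat 1" by auto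
qed

lemma vector_matrix_inv_symmetric:
  fixes Q :: "real^'k^'k"
  assumes inv: "invertible Q" and sym: "\<And>v w. v \<bullet> (Q *v w) = w \<bullet> (Q *v v)"
  shows "x v* matrix_inv Q = matrix_inv Q *v x"
proof -
  define y where "y = x v* matrix_inv Q"
  have "v \<bullet> (Q *v y) = v \<bullet> x" for v
  proof -
    have "v \<bullet> (Q *v y) = x \<bullet> (matrix_inv Q *v (Q *v v))"
      unfolding sym[of v] y_def by (rule dot_lmul_matrix)
    then show ?thesis by (simp add: matrix_vector_mul_assoc matrix_inv_mult[OF inv] inner_commute)
  qed
  then have "Q *v y = x" using vector_eq_ldot by blast
  then show ?thesis
    using matrix_vector_mul_assoc[of "matrix_inv Q" Q y]
    by (simp add: matrix_inv_mult[OF inv] y_def)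
qed

section \<open>The weighted logarithmic-derivative equation solved by gamma_op\<close>

definition basis_mat :: "('n::finite \<Rightarrow> complex^'n) \<Rightarrow> complex^'n^'n" where
  "basis_mat e = (\<chi> i j. e j $ i)"

definition diag_mat :: "('n::finite \<Rightarrow> complex) \<Rightarrow> complex^'n^'n" where
  "diag_mat d = (\<chi> i j. if i = j then d i else 0)"

lemma matrix_mult_diag_mat: "A ** diag_mat d = (\<chi> i k. A $ i $ k * d k)"
  by (simp add: vec_eq_iff matrix_matrix_mult_def diag_mat_def if_distrib[where f="\<lambda>x. _ * x"]
      cong: if_cong)

lemma diag_mat_matrix_mult: "diag_mat d ** A = (\<chi> j k. d j * A $ j $ k)"
  by (simp add: vec_eq_iff matrix_matrix_mult_def diag_mat_def if_distrib[where f="\<lambda>x. x * _"]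
      cong: if_cong)

lemma basis_mat_unitary:
  assumes "\<forall>j k. cinner (e j) (e k) = (if j = k then 1 else 0)"
  shows "cadj (basis_mat e) ** basis_mat e = mat 1" "basis_mat e ** cadj (basis_mat e) = mat 1"
proof -
  show "cadj (basis_mat e) ** basis_mat e = mat 1"
    using assms
    by (simp add: cadj_def basis_mat_def matrix_matrix_mult_def vec_eq_iff cinner_def mat_def)
  then show "basis_mat e ** cadj (basis_mat e) = mat 1"
    using matrix_left_right_inverse by blast
qed

lemma spectral_basis_mat:
  assumes "\<rho> = (\<chi> a b. \<Sum>j\<in>UNIV. complex_of_real (p j) * (e j $ a) * cnj (e j $ b))"
  shows "\<rho> = basis_mat e ** diag_mat (\<lambda>j. of_real (p j)) ** cadj (basis_mat e)"
  unfolding matrix_mult_diag_mat using assms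
  by (simp add: vec_eq_iff matrix_matrix_mult_def cadj_def basis_mat_def algebra_simps)

lemma cinner_basis_mat: "cinner (e j) (R *v e k) = (cadj (basis_mat e) ** R ** basis_mat e) $ j $ k"
proof -
  have "cinner (e j) (R *v e k) = (\<Sum>i\<in>UNIV. \<Sum>l\<in>UNIV. cnj (e j $ i) * R $ i $ l * e k $ l)"
    by (simp add: cinner_def matrix_vector_mult_def sum_distrib_left mult.assoc)
  also have "\<dots> = (\<Sum>l\<in>UNIV. \<Sum>i\<in>UNIV. cnj (e j $ i) * R $ i $ l * e k $ l)"
    by (rule sum.swap)
  finally show ?thesis
    by (simp add: matrix_matrix_mult_def cadj_def basis_mat_def sum_distrib_right)
qed

lemma gamma_op_basis_mat:
  "gamma_op u p e R = basis_mat e **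
     (\<chi> j k. - ((cadj (basis_mat e) ** R ** basis_mat e) $ j $ k / 2)
               / of_real (u * p k + (1 - u) * p j))
     ** cadj (basis_mat e)"
  (is "_ = ?E ** ?M ** cadj ?E")
proof -
  have "gamma_op u p e R $ a $ b = (\<Sum>j\<in>UNIV. \<Sum>k\<in>UNIV. e j $ a * ?M $ j $ k * cnj (e k $ b))" for a b
    by (simp add: gamma_op_def cinner_basis_mat algebra_simps)
  also have "\<dots> a b = (\<Sum>k\<in>UNIV. \<Sum>j\<in>UNIV. e j $ a * ?M $ j $ k * cnj (e k $ b))" for a b
    by (rule sum.swap)
  finally show ?thesis
    by (simp add: vec_eq_iff matrix_matrix_mult_def basis_mat_def cadj_def sum_distrib_right)
qed

lemma gamma_op_ld_equation:
  assumes u: "0 < u" "u < 1" and p_pos: "\<forall>j. p j > 0"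
    and ortho: "\<forall>j k. cinner (e j) (e k) = (if j = k then 1 else 0)"
    and spectral: "\<rho> = (\<chi> a b. \<Sum>j\<in>UNIV. complex_of_real (p j) * (e j $ a) * cnj (e j $ b))"
  shows "cscale (of_real u) (gamma_op u p e R ** \<rho>)
           + cscale (of_real (1 - u)) (\<rho> ** gamma_op u p e R) = cscale (- 1/2) R"
proof -
  define E where "E = basis_mat e"
  define P where "P = diag_mat (\<lambda>j. complex_of_real (p j))"
  define M where
    "M = (\<chi> j k. - ((cadj E ** R ** E) $ j $ k / 2) / complex_of_real (u * p k + (1 - u) * p j))"
  have EhE: "cadj E ** E = mat 1" and EEh: "E ** cadj E = mat 1"
    using basis_mat_unitary[OF ortho] by (simp_all add: E_def)
  have \<rho>: "\<rho> = E ** P ** cadj E"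
    using spectral_basis_mat[OF spectral] by (simp add: E_def P_def)
  have \<gamma>: "gamma_op u p e R = E ** M ** cadj E"
    by (simp add: gamma_op_basis_mat E_def M_def)
  have conj_mult: "E ** A ** cadj E ** (E ** B ** cadj E) = E ** (A ** B) ** cadj E" for A B
    by (metis EhE matrix_mul_assoc matrix_mul_rid)
  \<comment> \<open>In the eigenbasis of \<open>\<rho>\<close> the equation is entrywise, and the denominators of
      \<open>gamma_op\<close> are exactly the weights \<open>u p\<^sub>k + (1 - u) p\<^sub>j\<close> it produces.\<close>
  have "cscale (of_real u) (M ** P) + cscale (of_real (1 - u)) (P ** M)
          = cscale (- 1/2) (cadj E ** R ** E)"
  proof -
    have "of_real u * (M $ j $ k * of_real (p k)) + of_real (1 - u) * (of_real (p j) * M $ j $ k)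
        = - 1/2 * (cadj E ** R ** E) $ j $ k" for j k
    proof -
      define d where "d = complex_of_real (u * p k + (1 - u) * p j)"
      have "u * p k + (1 - u) * p j > 0"
        using u p_pos by (smt (verit) mult_pos_pos)
      then have "d \<noteq> 0" unfolding d_def by (metis of_real_eq_0_iff less_irrefl)
      moreover have "M $ j $ k = - ((cadj E ** R ** E) $ j $ k / 2) / d"
        by (simp add: M_def d_def)
      ultimately have "M $ j $ k * d = - 1/2 * (cadj E ** R ** E) $ j $ k"
        by (simp add: field_simps)
      then show ?thesis by (simp add: d_def algebra_simps)
    qed
    then show ?thesis
      by (simp add: vec_eq_iff cscale_def P_def matrix_mult_diag_mat diag_mat_matrix_mult)
  qed
  then have "E ** (cscale (of_real u) (M ** P) + cscale (of_real (1 - u)) (P ** M)) ** cadj E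
      = cscale (- 1/2) ((E ** cadj E) ** R ** (E ** cadj E))"
    by (simp add: cscale_mult_left cscale_mult_right matrix_mul_assoc)
  then show ?thesis
    by (simp add: \<rho> \<gamma> conj_mult EEh matrix_add_ldistrib matrix_add_rdistrib cscale_mult_left
        cscale_mult_right)
qed

section \<open>The 6x6 blocks as complex 3x3 forms\<close>

text \<open>Rows \<open>a\<close> and \<open>a + 3\<close> of the 6x6 matrices carry the real and imaginary part of one
  complex coordinate; in these coordinates \<open>Q1\<close>, \<open>Q2\<close>, \<open>Q3\<close> are real parts of
  sesquilinear forms on \<open>\<complex>\<^sup>3\<close>.\<close>

definition complexify :: "real^(3+3) \<Rightarrow> 3 \<Rightarrow> complex" where
  "complexify w a = of_real (w $ Inl a) + \<i> * of_real (w $ Inr a)"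

lemma sum_UNIV_Plus:
  "sum f (UNIV :: ('a::finite + 'b::finite) set) = (\<Sum>a\<in>UNIV. f (Inl a)) + (\<Sum>b\<in>UNIV. f (Inr b))"
  using sum.Plus[of "UNIV::'a set" "UNIV::'b set" f] by (simp add: comp_def)

lemma Re_sum_complexify: "Re (\<Sum>a\<in>UNIV. cnj (complexify v a) * complexify w a) = v \<bullet> w"
  by (simp add: complexify_def Re_sum inner_vec_def sum_UNIV_Plus sum.distrib)

lemma complexify_eqI:
  assumes "\<And>v. Re (\<Sum>a\<in>UNIV. cnj (complexify v a) * z a) = v \<bullet> w"
  shows "z = complexify w"
proof
  fix a
  have "complexify (axis (Inl a) 1) b = (if b = a then 1 else 0)"
    and "complexify (axis (Inr a) 1) b = (if b = a then \<i> else 0)" for b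
    by (simp_all add: complexify_def axis_def)
  then have "Re (z a) = w $ Inl a" "Im (z a) = w $ Inr a"
    using assms[of "axis (Inl a) 1"] assms[of "axis (Inr a) 1"]
    by (simp_all add: inner_axis' if_distrib[where f="\<lambda>x. cnj x * _"] cong: if_cong)
  then show "z a = complexify w a"
    by (simp add: complexify_def complex_eq_iff)
qed

lemma inner_ReM_blk6:
  fixes A B C D :: "complex^3^3" and v w :: "real^(3+3)"
  shows "v \<bullet> (ReM (blk6 A B C D) *v w) =
    (\<Sum>a\<in>UNIV. \<Sum>b\<in>UNIV. v$Inl a * Re (A$a$b) * w$Inl b + v$Inl a * Re (B$a$b) * w$Inr b
        + v$Inr a * Re (C$a$b) * w$Inl b + v$Inr a * Re (D$a$b) * w$Inr b)"
  by (simp add: inner_vec_def matrix_vector_mult_def sum_UNIV_Plus ReM_def blk6_def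
      sum_distrib_left sum.distrib algebra_simps)

lemma inner_ReM_blk6_conj_right:
  "v \<bullet> (ReM (blk6 G (cscale (- \<i>) G) (cscale \<i> G) G) *v w) =
     Re (\<Sum>a\<in>UNIV. \<Sum>b\<in>UNIV. complexify v a * cnj (complexify w b) * G$a$b)"
  unfolding inner_ReM_blk6 Re_sum
  by (intro sum.cong refl) (simp add: complexify_def cscale_def algebra_simps)

lemma inner_ReM_blk6_conj_left:
  "v \<bullet> (ReM (blk6 G (cscale \<i> G) (cscale (- \<i>) G) G) *v w) =
     Re (\<Sum>a\<in>UNIV. \<Sum>b\<in>UNIV. cnj (complexify v a) * complexify w b * G$a$b)"
  unfolding inner_ReM_blk6 Re_sum
  by (intro sum.cong refl) (simp add: complexify_def cscale_def algebra_simps)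

lemma inner_ReM_blk6_real_part:
  "v \<bullet> (ReM (cscale (1/2) (blk6 (G + cconj G) (cscale \<i> (G - cconj G))
                        (cscale (- \<i>) (G - cconj G)) (G + cconj G))) *v w) =
     Re (\<Sum>a\<in>UNIV. \<Sum>b\<in>UNIV. cnj (complexify v a) * complexify w b * G$a$b)"
proof -
  have "ReM (cscale (1/2) (blk6 (G + cconj G) (cscale \<i> (G - cconj G))
                                (cscale (- \<i>) (G - cconj G)) (G + cconj G)))
      = ReM (blk6 G (cscale \<i> G) (cscale (- \<i>) G) G)"
    by (simp add: ReM_def cscale_def blk6_def cconj_def vec_eq_iff split: sum.split)
  then show ?thesis by (simp add: inner_ReM_blk6_conj_left)
qed

section \<open>Bounds on the Holevo Cramer-Rao bound\<close>

lemma trace_norm_2x2_antisymmetric: "trace_norm_2x2 0 s (- s) 0 = 2 * \<bar>s\<bar>"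
proof -
  have "(s\<^sup>2 + s\<^sup>2)\<^sup>2 - 4 * (s * s)\<^sup>2 = 0"
    by (simp add: power2_eq_square algebra_simps)
  then show ?thesis by (simp add: trace_norm_2x2_def Let_def)
qed

lemma Re_cquad: "Re (cquad x M y) = x \<bullet> (ReM M *v y)"
  by (simp add: cquad_def inner_vec_def matrix_vector_mult_def ReM_def Re_sum sum_distrib_left
      algebra_simps)

lemma stationary_contact_affine_majorant:
  fixes g :: "real \<Rightarrow> real"
  assumes u: "0 < u" "u < 1"
    and le: "\<And>v. 0 < v \<Longrightarrow> v < 1 \<Longrightarrow> g v \<le> v * a + (1 - v) * b"
    and eq: "g u = u * a + (1 - u) * b"
    and deriv: "(g has_real_derivative 0) (at u)"
  shows "a = b"
proof -
  define \<phi> where "\<phi> v = v * a + (1 - v) * b - g v" for v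
  have "(\<phi> has_real_derivative (a - b - 0)) (at u)"
    unfolding \<phi>_def using deriv by (auto intro!: derivative_eq_intros)
  moreover have "0 < min u (1 - u)"
    using u by simp
  moreover have "\<forall>v. \<bar>u - v\<bar> < min u (1 - u) \<longrightarrow> \<phi> u \<le> \<phi> v"
  proof (intro allI impI)
    fix v assume "\<bar>u - v\<bar> < min u (1 - u)"
    then have "0 < v" "v < 1" by auto
    then show "\<phi> u \<le> \<phi> v"
      using le[of v] eq by (simp add: \<phi>_def)
  qed
  ultimately have "a - b - 0 = 0"
    by (rule DERIV_local_min)
  then show ?thesis by simp
qed

locale spectral_state =
  fixes \<rho> \<rho>1 \<rho>2 :: "complex^'n^'n"
    and p :: "'n::finite \<Rightarrow> real"
    and e :: "'n \<Rightarrow> complex^'n"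
  assumes p_pos: "\<forall>j. p j > 0"
    and p_sum: "(\<Sum>j\<in>UNIV. p j) = 1"
    and ortho: "\<forall>j k. cinner (e j) (e k) = (if j = k then 1 else 0)"
    and spectral: "\<rho> = (\<chi> a b. \<Sum>j\<in>UNIV. complex_of_real (p j) * (e j $ a) * cnj (e j $ b))"
    and herm1: "hermitian_mat \<rho>1" and herm2: "hermitian_mat \<rho>2"
    and tr1: "trace \<rho>1 = 0" and tr2: "trace \<rho>2 = 0"
begin

abbreviation Q :: "real \<Rightarrow> real^(3+3)^(3+3)" where
  "Q u \<equiv> Qmat u \<rho> \<rho>1 \<rho>2 p e"

abbreviation L :: "real \<Rightarrow> real" where
  "L u \<equiv> Lbound (Q u)"

abbreviation U :: "real \<Rightarrow> real" where
  "U u \<equiv> Ubound (Q u) (Q1 u \<rho> \<rho>1 \<rho>2 p e) (Q2 u \<rho> \<rho>1 \<rho>2 p e)"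

definition drho :: "3 \<Rightarrow> complex^'n^'n" where
  "drho a = (if a = 0 then \<rho> else if a = 1 then \<rho>1 else \<rho>2)"

text \<open>\<open>gamma u 0 = -I/2\<close> is the paper's \<open>\<gamma>\<^sub>1\<close>; it solves the same weighted equation as
  \<open>\<gamma>\<^sub>2\<close>, \<open>\<gamma>\<^sub>3\<close> with \<open>\<rho>\<close> in place of \<open>\<rho>\<^sub>1\<close>, \<open>\<rho>\<^sub>2\<close>, which is why \<open>drho 0 = \<rho>\<close>.\<close>

definition gamma :: "real \<Rightarrow> 3 \<Rightarrow> complex^'n^'n" where
  "gamma u a = (if a = 0 then cscale (- 1/2) (mat 1) else gamma_op u p e (drho a))"

definition rho_inner :: "complex^'n^'n \<Rightarrow> complex^'n^'n \<Rightarrow> complex" where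
  "rho_inner A B = trace (A ** \<rho> ** cadj B)"

definition gamma_comb :: "real \<Rightarrow> real^(3+3) \<Rightarrow> complex^'n^'n" where
  "gamma_comb u w = (\<Sum>a\<in>UNIV. cscale (complexify w a) (gamma u a))"

definition mixed_form :: "real \<Rightarrow> complex^'n^'n \<Rightarrow> real" where
  "mixed_form u A = u * Re (rho_inner A A) + (1 - u) * Re (rho_inner (cadj A) (cadj A))"

text \<open>The constraints on \<open>A = X1 + i X2\<close>: \<open>Tr(\<rho> A) = 0\<close>, \<open>Tr(\<rho>\<^sub>1 A) = 1\<close>,
  \<open>Tr(\<rho>\<^sub>2 A) = i\<close>, which are precisely the coordinates \<open>complexify bvec\<close>.\<close>

definition unbiased :: "complex^'n^'n \<Rightarrow> bool" where
  "unbiased A \<longleftrightarrow> (\<forall>a. trace (A ** drho a) = complexify bvec a)"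

lemma rho_hermitian [simp]: "cadj \<rho> = \<rho>"
  by (subst (1 2) spectral) (simp add: cadj_def vec_eq_iff algebra_simps)

lemma drho_hermitian [simp]: "cadj (drho a) = drho a"
  using herm1 herm2 by (simp add: drho_def hermitian_mat_def)

lemma trace_rho: "trace \<rho> = 1"
proof -
  have "trace \<rho> = (\<Sum>i\<in>UNIV. \<Sum>j\<in>UNIV. complex_of_real (p j) * (cnj (e j $ i) * e j $ i))"
    by (subst spectral) (simp add: trace_def algebra_simps)
  also have "\<dots> = (\<Sum>j\<in>UNIV. complex_of_real (p j) * cinner (e j) (e j))"
    by (subst sum.swap) (simp add: cinner_def sum_distrib_left)
  finally show ?thesis
    using ortho p_sum by (simp flip: of_real_sum)
qed

lemma trace_drho: "a \<noteq> 0 \<Longrightarrow> trace (drho a) = 0"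
  using tr1 tr2 by (simp add: drho_def)

lemma trace_rho_cadj: "trace (\<rho> ** cadj A) = cnj (trace (A ** \<rho>))"
  by (simp add: cadj_mult flip: trace_cadj)

lemma gamma_ld_equation:
  assumes "0 < u" "u < 1"
  shows "cscale (of_real u) (gamma u a ** \<rho>) + cscale (of_real (1 - u)) (\<rho> ** gamma u a)
         = cscale (- 1/2) (drho a)"
proof (cases "a = 0")
  case True
  then show ?thesis
    by (simp add: gamma_def drho_def cscale_mult_left cscale_mult_right)
      (simp add: vec_eq_iff cscale_def algebra_simps)
next
  case False
  then show ?thesis
    using gamma_op_ld_equation[OF assms p_pos ortho spectral] by (simp add: gamma_def)
qed

lemma gamma_adj_ld_equation:
  assumes "0 < u" "u < 1"
  shows "cscale (of_real u) (\<rho> ** cadj (gamma u a))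
           + cscale (of_real (1 - u)) (cadj (gamma u a) ** \<rho>) = cscale (- 1/2) (drho a)"
  using arg_cong[OF gamma_ld_equation[OF assms, of a], of cadj]
  by (simp add: cadj_add cadj_cscale cadj_mult)

lemma trace_gamma_rho:
  assumes "0 < u" "u < 1" "a \<noteq> 0"
  shows "trace (gamma u a ** \<rho>) = 0" "trace (\<rho> ** gamma u a) = 0"
    "trace (\<rho> ** cadj (gamma u a)) = 0" "trace (cadj (gamma u a) ** \<rho>) = 0"
proof -
  show "trace (gamma u a ** \<rho>) = 0"
    using arg_cong[OF gamma_ld_equation[OF assms(1,2), of a], of trace] assms(3)
    by (simp add: trace_add trace_cscale trace_drho trace_mul_sym[of \<rho>] algebra_simps)
  then show "trace (\<rho> ** gamma u a) = 0"
    by (simp add: trace_mul_sym[of \<rho>])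
  show "trace (\<rho> ** cadj (gamma u a)) = 0"
    by (simp add: trace_rho_cadj \<open>trace (gamma u a ** \<rho>) = 0\<close>)
  then show "trace (cadj (gamma u a) ** \<rho>) = 0"
    by (simp add: trace_mul_sym[of \<rho>])
qed

lemma gamma_zero: "gamma u 0 = cscale (- 1/2) (mat 1)"
  by (simp add: gamma_def)

lemma gamma_nonzero: "a \<noteq> 0 \<Longrightarrow> gamma u a = (if a = 1 then gamma_op u p e \<rho>1 else gamma_op u p e \<rho>2)"
  by (simp add: gamma_def drho_def)

lemma G1_gram:
  assumes u: "0 < u" "u < 1"
  shows "G1 u \<rho> \<rho>1 \<rho>2 p e = (\<chi> a b. rho_inner (gamma u a) (gamma u b))"
proof -
  have "G1 u \<rho> \<rho>1 \<rho>2 p e $ a $ b = rho_inner (gamma u a) (gamma u b)" for a b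
    using trace_gamma_rho[OF u, of a] trace_gamma_rho[OF u, of b]
    by (cases "a = 0"; cases "b = 0")
      (simp_all add: G1_def rho_inner_def gamma_zero gamma_nonzero cscale_mult_left
        cscale_mult_right trace_cscale cadj_cscale trace_rho)
  then show ?thesis by (simp add: vec_eq_iff)
qed

lemma G2_gram:
  assumes u: "0 < u" "u < 1"
  shows "G2 u \<rho> \<rho>1 \<rho>2 p e = (\<chi> a b. rho_inner (cadj (gamma u a)) (cadj (gamma u b)))"
proof -
  have "G2 u \<rho> \<rho>1 \<rho>2 p e $ a $ b = rho_inner (cadj (gamma u a)) (cadj (gamma u b))" for a b
    using trace_gamma_rho[OF u, of a] trace_gamma_rho[OF u, of b]
    by (cases "a = 0"; cases "b = 0")
      (simp_all add: G2_def rho_inner_def gamma_zero gamma_nonzero cscale_mult_left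
        cscale_mult_right trace_cscale cadj_cscale trace_rho)
  then show ?thesis by (simp add: vec_eq_iff)
qed

lemma G3_trace:
  assumes u: "0 < u" "u < 1"
  shows "G3 u \<rho>1 \<rho>2 p e = (\<chi> a b. trace (drho a ** gamma u b))"
proof -
  have "G3 u \<rho>1 \<rho>2 p e $ a $ b = trace (drho a ** gamma u b)" for a b
    using trace_gamma_rho[OF u, of b] trace_drho[of a]
    by (cases "a = 0"; cases "b = 0")
      (simp_all add: G3_def drho_def gamma_zero gamma_nonzero cscale_mult_right trace_cscale
        trace_rho)
  then show ?thesis by (simp add: vec_eq_iff)
qed

lemma rho_inner_add_left: "rho_inner (A + B) C = rho_inner A C + rho_inner B C"
  by (simp add: rho_inner_def matrix_add_rdistrib trace_add)

lemma rho_inner_add_right: "rho_inner A (B + C) = rho_inner A B + rho_inner A C"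
  by (simp add: rho_inner_def cadj_add matrix_add_ldistrib trace_add)

lemma rho_inner_diff_left: "rho_inner (A - B) C = rho_inner A C - rho_inner B C"
  by (simp add: rho_inner_def matrix_diff_rdistrib trace_sub)

lemma rho_inner_diff_right: "rho_inner A (B - C) = rho_inner A B - rho_inner A C"
  by (simp add: rho_inner_def cadj_diff matrix_diff_ldistrib trace_sub)

lemma rho_inner_cscale_left: "rho_inner (cscale c A) B = c * rho_inner A B"
  by (simp add: rho_inner_def cscale_mult_left trace_cscale)

lemma rho_inner_cscale_right: "rho_inner A (cscale c B) = cnj c * rho_inner A B"
  by (simp add: rho_inner_def cadj_cscale cscale_mult_right trace_cscale)

lemma rho_inner_sum_left: "rho_inner (\<Sum>a\<in>S. f a) B = (\<Sum>a\<in>S. rho_inner (f a) B)"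
  by (simp add: rho_inner_def sum_matrix_mult_left trace_sum)

lemma rho_inner_sum_right: "rho_inner A (\<Sum>a\<in>S. f a) = (\<Sum>a\<in>S. rho_inner A (f a))"
  by (simp add: rho_inner_def cadj_sum sum_matrix_mult_right trace_sum)

lemmas rho_inner_sesquilinear = rho_inner_add_left rho_inner_add_right rho_inner_diff_left
  rho_inner_diff_right rho_inner_cscale_left rho_inner_cscale_right rho_inner_sum_left
  rho_inner_sum_right

lemma rho_inner_commute: "rho_inner B A = cnj (rho_inner A B)"
  by (simp add: rho_inner_def cadj_mult matrix_mul_assoc flip: trace_cadj)

lemma rho_inner_self_nonneg: "0 \<le> Re (rho_inner A A)"
proof -
  define N where "N = A ** basis_mat e"
  have "rho_inner A A = trace (N ** diag_mat (\<lambda>j. of_real (p j)) ** cadj N)"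
    unfolding rho_inner_def N_def
    by (subst spectral_basis_mat[OF spectral]) (simp add: cadj_mult matrix_mul_assoc)
  also have "\<dots> = (\<Sum>i\<in>UNIV. \<Sum>k\<in>UNIV. of_real (p k) * (N $ i $ k * cnj (N $ i $ k)))"
    unfolding matrix_mult_diag_mat
    by (simp add: trace_def matrix_matrix_mult_def cadj_def algebra_simps)
  also have "\<dots> = (\<Sum>i\<in>UNIV. \<Sum>k\<in>UNIV. of_real (p k * (cmod (N $ i $ k))\<^sup>2))"
    by (simp only: complex_norm_square of_real_mult)
  finally have "Re (rho_inner A A) = (\<Sum>i\<in>UNIV. \<Sum>k\<in>UNIV. p k * (cmod (N $ i $ k))\<^sup>2)"
    by (simp add: Re_sum)
  also have "\<dots> \<ge> 0"
    using p_pos by (intro sum_nonneg) (simp add: less_imp_le)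
  finally show ?thesis .
qed

lemma mixed_form_nonneg: "0 < u \<Longrightarrow> u < 1 \<Longrightarrow> 0 \<le> mixed_form u A"
  unfolding mixed_form_def using rho_inner_self_nonneg[of A] rho_inner_self_nonneg[of "cadj A"]
  by simp

lemma rho_inner_gamma_right:
  assumes "0 < u" "u < 1"
  shows "of_real u * rho_inner A (gamma u a)
           + of_real (1 - u) * rho_inner (cadj (gamma u a)) (cadj A) = - 1/2 * trace (A ** drho a)"
proof -
  have "rho_inner A (gamma u a) = trace (A ** (\<rho> ** cadj (gamma u a)))"
    by (simp add: rho_inner_def matrix_mul_assoc)
  moreover have "rho_inner (cadj (gamma u a)) (cadj A) = trace (A ** (cadj (gamma u a) ** \<rho>))"
    unfolding rho_inner_def cadj_cadj by (rule trace_mul_sym)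
  ultimately have "of_real u * rho_inner A (gamma u a)
                    + of_real (1 - u) * rho_inner (cadj (gamma u a)) (cadj A)
      = trace (A ** (cscale (of_real u) (\<rho> ** cadj (gamma u a))
                     + cscale (of_real (1 - u)) (cadj (gamma u a) ** \<rho>)))"
    by (simp add: matrix_add_ldistrib cscale_mult_right trace_add trace_cscale)
  also have "\<dots> = trace (A ** cscale (- 1/2) (drho a))"
    by (simp only: gamma_adj_ld_equation[OF assms])
  finally show ?thesis
    by (simp add: cscale_mult_right trace_cscale)
qed

lemma rho_inner_gamma_comb_right:
  assumes "0 < u" "u < 1"
  shows "of_real u * rho_inner A (gamma_comb u w)
           + of_real (1 - u) * rho_inner (cadj (gamma_comb u w)) (cadj A)
         = - 1/2 * (\<Sum>a\<in>UNIV. cnj (complexify w a) * trace (A ** drho a))"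
proof -
  have "of_real u * rho_inner A (gamma_comb u w)
          + of_real (1 - u) * rho_inner (cadj (gamma_comb u w)) (cadj A)
      = (\<Sum>a\<in>UNIV. cnj (complexify w a) * (of_real u * rho_inner A (gamma u a)
                       + of_real (1 - u) * rho_inner (cadj (gamma u a)) (cadj A)))"
    by (simp add: gamma_comb_def cadj_sum cadj_cscale rho_inner_sesquilinear sum_distrib_left
        distrib_left sum.distrib mult.left_commute)
  also have "\<dots> = (\<Sum>a\<in>UNIV. cnj (complexify w a) * (- 1/2 * trace (A ** drho a)))"
    by (simp only: rho_inner_gamma_right[OF assms])
  finally show ?thesis
    by (simp add: sum_distrib_left mult.left_commute)
qed

lemma rho_inner_gamma_comb:
  "rho_inner (gamma_comb u v) (gamma_comb u w)
     = (\<Sum>a\<in>UNIV. \<Sum>b\<in>UNIV. complexify v a * cnj (complexify w b)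
                                * rho_inner (gamma u a) (gamma u b))"
  by (simp add: gamma_comb_def rho_inner_sesquilinear sum_distrib_left)
    (subst sum.swap, simp add: algebra_simps)

lemma rho_inner_cadj_gamma_comb:
  "rho_inner (cadj (gamma_comb u v)) (cadj (gamma_comb u w))
     = (\<Sum>a\<in>UNIV. \<Sum>b\<in>UNIV. cnj (complexify v a) * complexify w b
                                * rho_inner (cadj (gamma u a)) (cadj (gamma u b)))"
  by (simp add: gamma_comb_def cadj_sum cadj_cscale rho_inner_sesquilinear sum_distrib_left)
    (subst sum.swap, simp add: algebra_simps)

lemma Q1_form:
  assumes "0 < u" "u < 1"
  shows "v \<bullet> (ReM (Q1 u \<rho> \<rho>1 \<rho>2 p e) *v w) = Re (rho_inner (gamma_comb u v) (gamma_comb u w))"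
  unfolding Q1_def Let_def inner_ReM_blk6_conj_right
  by (simp add: G1_gram[OF assms] rho_inner_gamma_comb)

lemma Q2_form:
  assumes "0 < u" "u < 1"
  shows "v \<bullet> (ReM (Q2 u \<rho> \<rho>1 \<rho>2 p e) *v w)
           = Re (rho_inner (cadj (gamma_comb u v)) (cadj (gamma_comb u w)))"
  unfolding Q2_def Let_def inner_ReM_blk6_conj_left
  by (simp add: G2_gram[OF assms] rho_inner_cadj_gamma_comb)

lemma Q3_form:
  assumes u: "0 < u" "u < 1"
  shows "v \<bullet> (ReM (Q3 u \<rho>1 \<rho>2 p e) *v w)
           = - 2 * Re (of_real u * rho_inner (gamma_comb u w) (gamma_comb u v)
                      + of_real (1 - u) * rho_inner (cadj (gamma_comb u v)) (cadj (gamma_comb u w)))"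
proof -
  have "trace (gamma_comb u w ** drho a)
          = (\<Sum>b\<in>UNIV. complexify w b * trace (drho a ** gamma u b))" for a
    by (simp add: gamma_comb_def sum_matrix_mult_left trace_sum cscale_mult_left trace_cscale
        trace_mul_sym[of "gamma u _"])
  then have "v \<bullet> (ReM (Q3 u \<rho>1 \<rho>2 p e) *v w)
      = Re (\<Sum>a\<in>UNIV. cnj (complexify v a) * trace (gamma_comb u w ** drho a))"
    unfolding Q3_def Let_def inner_ReM_blk6_real_part
    by (simp add: G3_trace[OF u] sum_distrib_left mult.assoc)
  also have "\<dots> = - 2 * Re (- 1/2
                      * (\<Sum>a\<in>UNIV. cnj (complexify v a) * trace (gamma_comb u w ** drho a)))"
    by simp
  finally show ?thesis
    by (simp only: rho_inner_gamma_comb_right[OF u])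
qed

lemma Qmat_form:
  assumes "0 < u" "u < 1"
  shows "v \<bullet> (Q u *v w) = - (u * Re (rho_inner (gamma_comb u v) (gamma_comb u w))
           + (1 - u) * Re (rho_inner (cadj (gamma_comb u v)) (cadj (gamma_comb u w))))"
proof -
  have "Re (rho_inner (gamma_comb u w) (gamma_comb u v))
          = Re (rho_inner (gamma_comb u v) (gamma_comb u w))"
    by (subst rho_inner_commute) simp
  then show ?thesis
    by (simp add: Qmat_def matrix_vector_mult_add_rdistrib inner_add_right Q1_form[OF assms]
        Q2_form[OF assms] Q3_form[OF assms] flip: scaleR_matrix_vector_assoc)
qed

lemma Qmat_symmetric:
  assumes "0 < u" "u < 1"
  shows "v \<bullet> (Q u *v w) = w \<bullet> (Q u *v v)"
proof -
  have "Re (rho_inner B A) = Re (rho_inner A B)" for A B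
    by (subst rho_inner_commute) simp
  then show ?thesis by (simp add: Qmat_form[OF assms])
qed

lemma mixed_form_gamma_comb:
  assumes "0 < u" "u < 1"
  shows "mixed_form u (gamma_comb u w) = - (w \<bullet> (Q u *v w))"
  by (simp add: mixed_form_def Qmat_form[OF assms])

text \<open>Expand \<open>mixed_form u (A - gamma_comb u w) \<ge> 0\<close>: the cross term is fixed by the
  constraints on \<open>A\<close>.\<close>

lemma mixed_form_lower_bound:
  assumes u: "0 < u" "u < 1" and "unbiased A"
  shows "- (bvec \<bullet> w) + w \<bullet> (Q u *v w) \<le> mixed_form u A"
proof -
  define C where "C = gamma_comb u w"
  define X where "X = of_real u * rho_inner A C + of_real (1 - u) * rho_inner (cadj C) (cadj A)"
  have "Re (rho_inner C A) = Re (rho_inner A C)"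
    and "Re (rho_inner (cadj A) (cadj C)) = Re (rho_inner (cadj C) (cadj A))"
    by (subst rho_inner_commute, simp)+
  then have "mixed_form u (A - C) = mixed_form u A - 2 * Re X + mixed_form u C"
    by (simp add: mixed_form_def X_def cadj_diff rho_inner_sesquilinear algebra_simps)
  moreover have "X = - 1/2 * (\<Sum>a\<in>UNIV. cnj (complexify w a) * trace (A ** drho a))"
    unfolding X_def C_def by (rule rho_inner_gamma_comb_right[OF u])
  then have "Re X = - 1/2 * (bvec \<bullet> w)"
    using \<open>unbiased A\<close> Re_sum_complexify[of w bvec] by (simp add: unbiased_def inner_commute)
  moreover have "mixed_form u C = - (w \<bullet> (Q u *v w))"
    by (simp add: C_def mixed_form_gamma_comb[OF u])
  ultimately show ?thesis
    using mixed_form_nonneg[OF u, of "A - C"] by linarith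
qed

lemma Lbound_le_mixed_form:
  assumes u: "0 < u" "u < 1" and inv: "invertible (Q u)" and "unbiased A"
  shows "L u \<le> mixed_form u A"
proof -
  define y where "y = matrix_inv (Q u) *v bvec"
  have "Q u *v y = bvec"
    using inv by (simp add: y_def matrix_vector_mul_assoc matrix_inv_mult)
  then have "- (bvec \<bullet> ((1/2) *\<^sub>R y)) + (1/2) *\<^sub>R y \<bullet> (Q u *v ((1/2) *\<^sub>R y)) = L u"
    by (simp add: Lbound_def y_def matrix_vector_mult_scaleR inner_commute)
  then show ?thesis
    using mixed_form_lower_bound[OF u \<open>unbiased A\<close>, of "(1/2) *\<^sub>R y"] by simp
qed

lemma gamma_comb_unbiased:
  assumes u: "0 < u" "u < 1" and Qw: "Q u *v w = (1/2) *\<^sub>R bvec"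
  shows "unbiased (gamma_comb u w)"
proof -
  have "Re (\<Sum>a\<in>UNIV. cnj (complexify v a) * trace (gamma_comb u w ** drho a)) = v \<bullet> bvec" for v
  proof -
    have "v \<bullet> (Q u *v w) = - Re (of_real u * rho_inner (gamma_comb u w) (gamma_comb u v)
        + of_real (1 - u) * rho_inner (cadj (gamma_comb u v)) (cadj (gamma_comb u w)))"
      by (simp add: Qmat_form[OF u]) (subst rho_inner_commute, simp)
    also have "\<dots> = 1/2 * Re (\<Sum>a\<in>UNIV. cnj (complexify v a) * trace (gamma_comb u w ** drho a))"
      by (simp only: rho_inner_gamma_comb_right[OF u]) simp
    finally show ?thesis
      using Qw by simp
  qed
  then show ?thesis
    unfolding unbiased_def using complexify_eqI by metis
qed

lemma holevo_fun_hermitian: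
  assumes h1: "cadj X1 = X1" and h2: "cadj X2 = X2"
  defines "A \<equiv> X1 + cscale \<i> X2"
  shows "holevo_fun \<rho> X1 X2 = max (Re (rho_inner A A)) (Re (rho_inner (cadj A) (cadj A)))"
proof -
  have Z: "trace (\<rho> ** Xj ** Xk) = rho_inner Xk Xj" if "cadj Xj = Xj" for Xj Xk
    using trace_mul_sym[of Xk "\<rho> ** Xj"] that by (simp add: rho_inner_def matrix_mul_assoc)
  define t11 where "t11 = rho_inner X1 X1"
  define t12 where "t12 = rho_inner X1 X2"
  define t21 where "t21 = rho_inner X2 X1"
  define t22 where "t22 = rho_inner X2 X2"
  have t12: "t12 = cnj t21" and "Im t11 = 0" "Im t22 = 0"
    unfolding t11_def t12_def t21_def t22_def
    using rho_inner_commute[of X1 X1] rho_inner_commute[of X2 X2] rho_inner_commute[of X1 X2]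
    by (metis cnj.sel(2) neg_equal_zero)+
  then have "holevo_fun \<rho> X1 X2 = Re t11 + Re t22 + 2 * \<bar>Im t21\<bar>"
    using trace_norm_2x2_antisymmetric[of "Im t21"]
    by (simp add: holevo_fun_def Z h1 h2 t11_def t12_def t21_def t22_def)
  moreover have "Re (rho_inner A A) = Re t11 + Re t22 - 2 * Im t21"
    using t12 by (simp add: A_def rho_inner_sesquilinear t11_def t12_def t21_def t22_def)
  moreover have "Re (rho_inner (cadj A) (cadj A)) = Re t11 + Re t22 + 2 * Im t21"
    using t12 by (simp add: A_def cadj_add cadj_cscale h1 h2 rho_inner_sesquilinear
        t11_def t12_def t21_def t22_def)
  ultimately show ?thesis by (simp add: max_def abs_if)
qed

lemma mixed_form_le_holevo_fun:
  assumes "0 < u" "u < 1" and "holevo_feasible \<rho> \<rho>1 \<rho>2 X1 X2"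
  shows "mixed_form u (X1 + cscale \<i> X2) \<le> holevo_fun \<rho> X1 X2"
proof -
  have "cadj X1 = X1" "cadj X2 = X2"
    using assms(3) by (simp_all add: holevo_feasible_def hermitian_mat_def)
  from holevo_fun_hermitian[OF this] show ?thesis
    using assms(1,2) by (simp add: mixed_form_def convex_bound_le)
qed

lemma holevo_feasible_unbiased:
  assumes "holevo_feasible \<rho> \<rho>1 \<rho>2 X1 X2"
  shows "unbiased (X1 + cscale \<i> X2)"
proof -
  have "trace ((X1 + cscale \<i> X2) ** R) = trace (R ** X1) + \<i> * trace (R ** X2)" for R
    by (simp add: matrix_add_rdistrib cscale_mult_left trace_add trace_cscale
        trace_mul_sym[of X1] trace_mul_sym[of X2])
  then show ?thesis
    using assms
    by (simp add: unbiased_def forall_3 drho_def holevo_feasible_def complexify_def bvec_def)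
qed

lemma unbiased_holevo_feasible:
  assumes "unbiased A"
  shows "\<exists>X1 X2. holevo_feasible \<rho> \<rho>1 \<rho>2 X1 X2 \<and> X1 + cscale \<i> X2 = A"
proof (intro exI conjI)
  define X1 where "X1 = cscale (1/2) (A + cadj A)"
  define X2 where "X2 = cscale (- \<i>/2) (A - cadj A)"
  have "trace (R ** cadj A) = cnj (trace (A ** R))" if "cadj R = R" for R
    using that by (simp add: cadj_mult flip: trace_cadj)
  then have "trace (drho a ** X1) = Re (trace (A ** drho a))"
    and "trace (drho a ** X2) = Im (trace (A ** drho a))" for a
    by (simp_all add: X1_def X2_def cscale_mult_right trace_cscale matrix_add_ldistrib
        matrix_diff_ldistrib trace_add trace_sub trace_mul_sym[of "drho a" A] complex_eq_iff)
  then have tr: "trace (drho a ** X1) = bvec $ Inl a" "trace (drho a ** X2) = bvec $ Inr a" for a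
    using assms by (simp_all add: unbiased_def complexify_def)
  have "cadj X1 = X1" "cadj X2 = X2"
    by (simp_all add: X1_def X2_def cadj_def cscale_def vec_eq_iff algebra_simps)
  then show "holevo_feasible \<rho> \<rho>1 \<rho>2 X1 X2"
    using tr[of 0] tr[of 1] tr[of 2]
    by (simp add: holevo_feasible_def hermitian_mat_def drho_def bvec_def)
  show "X1 + cscale \<i> X2 = A"
    by (simp add: X1_def X2_def cscale_def vec_eq_iff field_simps)
qed

lemma optimal_unbiased:
  assumes u: "0 < u" "u < 1" and inv: "invertible (Q u)"
  obtains A where "unbiased A" "mixed_form u A = L u"
    "max (Re (rho_inner A A)) (Re (rho_inner (cadj A) (cadj A))) = U u"
proof
  define y where "y = matrix_inv (Q u) *v bvec"
  define w where "w = (1/2) *\<^sub>R y"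
  have Qw: "Q u *v w = (1/2) *\<^sub>R bvec"
    using inv
    by (simp add: w_def y_def matrix_vector_mult_scaleR matrix_vector_mul_assoc matrix_inv_mult)
  show "unbiased (gamma_comb u w)"
    using gamma_comb_unbiased[OF u Qw] .
  show "mixed_form u (gamma_comb u w) = L u"
    using Qw by (simp add: mixed_form_gamma_comb[OF u] Lbound_def w_def y_def inner_commute)
  have yQ: "bvec v* matrix_inv (Q u) = y"
    using vector_matrix_inv_symmetric[OF inv] Qmat_symmetric[OF u] by (simp add: y_def)
  have "Re (cquad (bvec v* matrix_inv (Q u)) (Q1 u \<rho> \<rho>1 \<rho>2 p e) (matrix_inv (Q u) *v bvec))
          = 4 * Re (rho_inner (gamma_comb u w) (gamma_comb u w))"
    unfolding yQ y_def[symmetric] Re_cquad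
    by (simp add: w_def matrix_vector_mult_scaleR flip: Q1_form[OF u])
  moreover have "Re (cquad (bvec v* matrix_inv (Q u)) (Q2 u \<rho> \<rho>1 \<rho>2 p e) (matrix_inv (Q u) *v bvec))
          = 4 * Re (rho_inner (cadj (gamma_comb u w)) (cadj (gamma_comb u w)))"
    unfolding yQ y_def[symmetric] Re_cquad
    by (simp add: w_def matrix_vector_mult_scaleR flip: Q2_form[OF u])
  ultimately show "max (Re (rho_inner (gamma_comb u w) (gamma_comb u w)))
               (Re (rho_inner (cadj (gamma_comb u w)) (cadj (gamma_comb u w)))) = U u"
    by (simp add: Ubound_def max_def)
qed

lemma HCRB_bounds:
  assumes u: "0 < u" "u < 1" and inv: "invertible (Q u)"
  shows "L u \<le> HCRB \<rho> \<rho>1 \<rho>2"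
    and "HCRB \<rho> \<rho>1 \<rho>2 \<le> U u"
proof -
  define S where "S = {holevo_fun \<rho> X1 X2 | X1 X2. holevo_feasible \<rho> \<rho>1 \<rho>2 X1 X2}"
  have lower: "L u \<le> s" if "s \<in> S" for s
  proof -
    obtain X1 X2 where f: "holevo_feasible \<rho> \<rho>1 \<rho>2 X1 X2" and s: "s = holevo_fun \<rho> X1 X2"
      using \<open>s \<in> S\<close> by (auto simp: S_def)
    show ?thesis
      using Lbound_le_mixed_form[OF u inv holevo_feasible_unbiased[OF f]]
        mixed_form_le_holevo_fun[OF u f] s by linarith
  qed
  obtain A where "unbiased A"
    and max_eq: "max (Re (rho_inner A A)) (Re (rho_inner (cadj A) (cadj A))) = U u"
    using optimal_unbiased[OF u inv] by blast
  then obtain X1 X2 where f: "holevo_feasible \<rho> \<rho>1 \<rho>2 X1 X2" and A: "X1 + cscale \<i> X2 = A"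
    using unbiased_holevo_feasible by blast
  then have "holevo_fun \<rho> X1 X2 = max (Re (rho_inner A A)) (Re (rho_inner (cadj A) (cadj A)))"
    using holevo_fun_hermitian[of X1 X2] by (simp add: holevo_feasible_def hermitian_mat_def)
  then have US: "U u \<in> S"
    unfolding S_def using f max_eq by (intro CollectI exI[of _ X1] exI[of _ X2]) simp
  then show "L u \<le> HCRB \<rho> \<rho>1 \<rho>2"
    unfolding HCRB_def S_def[symmetric] using lower by (blast intro: cInf_greatest)
  have "bdd_below S"
    using lower by (rule bdd_belowI)
  then show "HCRB \<rho> \<rho>1 \<rho>2 \<le> U u"
    unfolding HCRB_def S_def[symmetric] using US by (rule cInf_lower[rotated])
qed

lemma Lbound_eq_Ubound_if_stationary:
  assumes full_rank: "\<forall>v\<in>{0<..<1}. invertible (Q v)" and u: "0 < u" "u < 1"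
    and stationary: "((\<lambda>v. bvec \<bullet> (matrix_inv (Q v) *v bvec)) has_real_derivative 0) (at u)"
  shows "L u = U u"
proof -
  have inv: "invertible (Q v)" if "0 < v" "v < 1" for v
    using full_rank that by simp
  obtain A where "unbiased A" and mixed_eq: "mixed_form u A = L u"
    and max_eq: "max (Re (rho_inner A A)) (Re (rho_inner (cadj A) (cadj A))) = U u"
    using optimal_unbiased[OF u inv[OF u]] .
  define f1 where "f1 = Re (rho_inner A A)"
  define f2 where "f2 = Re (rho_inner (cadj A) (cadj A))"
  have "L v \<le> v * f1 + (1 - v) * f2" if "0 < v" "v < 1" for v
    using Lbound_le_mixed_form[OF that inv[OF that] \<open>unbiased A\<close>]
    by (simp add: mixed_form_def f1_def f2_def)
  moreover have "L u = u * f1 + (1 - u) * f2"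
    using mixed_eq by (simp add: mixed_form_def f1_def f2_def)
  moreover have "(L has_real_derivative 0) (at u)"
    unfolding Lbound_def using DERIV_cmult[OF stationary, of "- (1/4)"] by simp
  ultimately have "f1 = f2"
    by (rule stationary_contact_affine_majorant[OF u])
  then show ?thesis
    using mixed_eq max_eq by (simp add: mixed_form_def f1_def f2_def algebra_simps)
qed

end

theorem theorem3:
  fixes \<rho> \<rho>1 \<rho>2 :: "complex^'n^'n"
    and p :: "'n::finite \<Rightarrow> real"
    and e :: "'n \<Rightarrow> complex^'n"
  assumes p_pos: "\<forall>j. p j > 0"
    and p_sum: "(\<Sum>j\<in>UNIV. p j) = 1"
    and e_orthonormal: "\<forall>j k. cinner (e j) (e k) = (if j = k then 1 else 0)"
    and spectral: "\<rho> = (\<chi> a b. \<Sum>j\<in>UNIV. complex_of_real (p j) * (e j $ a) * cnj (e j $ b))"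
    and herm1: "hermitian_mat \<rho>1" and herm2: "hermitian_mat \<rho>2"
    and tr1: "trace \<rho>1 = 0" and tr2: "trace \<rho>2 = 0"
    and full_rank: "\<forall>u\<in>{0<..<1}. invertible (Qmat u \<rho> \<rho>1 \<rho>2 p e)"
  shows "(\<forall>u\<in>{0<..<1}. neg_definite (Qmat u \<rho> \<rho>1 \<rho>2 p e) \<longrightarrow>
            Lbound (Qmat u \<rho> \<rho>1 \<rho>2 p e) \<le> HCRB \<rho> \<rho>1 \<rho>2 \<and>
            HCRB \<rho> \<rho>1 \<rho>2 \<le> Ubound (Qmat u \<rho> \<rho>1 \<rho>2 p e) (Q1 u \<rho> \<rho>1 \<rho>2 p e) (Q2 u \<rho> \<rho>1 \<rho>2 p e))
       \<and> (\<forall>u\<in>{0<..<1}. neg_definite (Qmat u \<rho> \<rho>1 \<rho>2 p e) \<and>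
            ((\<lambda>v. bvec \<bullet> (matrix_inv (Qmat v \<rho> \<rho>1 \<rho>2 p e) *v bvec)) has_real_derivative 0) (at u) \<longrightarrow>
            Lbound (Qmat u \<rho> \<rho>1 \<rho>2 p e) = HCRB \<rho> \<rho>1 \<rho>2 \<and>
            HCRB \<rho> \<rho>1 \<rho>2 = Ubound (Qmat u \<rho> \<rho>1 \<rho>2 p e) (Q1 u \<rho> \<rho>1 \<rho>2 p e) (Q2 u \<rho> \<rho>1 \<rho>2 p e))"
proof -
  interpret spectral_state \<rho> \<rho>1 \<rho>2 p e
    using assms by unfold_locales auto
  have inv: "invertible (Qmat u \<rho> \<rho>1 \<rho>2 p e)" if "u \<in> {0<..<1}" for u
    using full_rank that by blast
  show ?thesis
  proof (intro conjI ballI impI)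
    fix u :: real assume "u \<in> {0<..<1}"
    then show "Lbound (Qmat u \<rho> \<rho>1 \<rho>2 p e) \<le> HCRB \<rho> \<rho>1 \<rho>2"
      and "HCRB \<rho> \<rho>1 \<rho>2 \<le> Ubound (Qmat u \<rho> \<rho>1 \<rho>2 p e) (Q1 u \<rho> \<rho>1 \<rho>2 p e) (Q2 u \<rho> \<rho>1 \<rho>2 p e)"
      using HCRB_bounds inv by auto
  next
    fix u :: real assume u: "u \<in> {0<..<1}"
      and "neg_definite (Qmat u \<rho> \<rho>1 \<rho>2 p e) \<and>
        ((\<lambda>v. bvec \<bullet> (matrix_inv (Qmat v \<rho> \<rho>1 \<rho>2 p e) *v bvec)) has_real_derivative 0) (at u)"
    then have "Lbound (Qmat u \<rho> \<rho>1 \<rho>2 p e)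
        = Ubound (Qmat u \<rho> \<rho>1 \<rho>2 p e) (Q1 u \<rho> \<rho>1 \<rho>2 p e) (Q2 u \<rho> \<rho>1 \<rho>2 p e)"
      using Lbound_eq_Ubound_if_stationary full_rank by auto
    then show "Lbound (Qmat u \<rho> \<rho>1 \<rho>2 p e) = HCRB \<rho> \<rho>1 \<rho>2"
      and "HCRB \<rho> \<rho>1 \<rho>2 = Ubound (Qmat u \<rho> \<rho>1 \<rho>2 p e) (Q1 u \<rho> \<rho>1 \<rho>2 p e) (Q2 u \<rho> \<rho>1 \<rho>2 p e)"
      using HCRB_bounds[of u] inv[OF u] u by (auto intro: order_antisym)
  qed
qed

end
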